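(* Let $r \colon B \to \mathbb{I}$ and let $m \colon A \rightarrowtail B$ be a monomorphism in $\widehat{\square}_\vee$. Then the map $r \hat{\times}_B m \colon M_r(m) \to \mathbb{I} \times B$ is a trivial cofibration, i.e. it has the left lifting property with respect to every fibration (every map with the right lifting property against all maps $\delta_k \hat{\times} m'$, $k\in\{0,1\}$, $m'$ a monomorphism).
   Context: Semilattices: sets with an associative, commutative, idempotent binary operation $\vee$; homomorphisms preserve $\vee$ (no bounds required). Let $\square_\vee$ (the semilattice cube category, equivalently the Lawvere theory of semilattices with constants $0,1$ satisfying $0\vee x=x$, $1\vee x=1$) be the category whose objects are the semilattices $[1]^n$ ($n\in\mathbb{N}$, $[1]=\{0<1\}$ with $\vee=\max$, pointwise structure) and whose morphisms are all semilattice homomorphisms between them. Fix a strongly inaccessible cardinal $\kappa$ and let $\widehat{\square}_\vee$ be the category of presheaves on $\square_\vee$ valued in $\kappa$-small sets. Let $\mathbb{I}$ be the representable presheaf on $[1]$, $\delta_k \colon 1 \to \mathbb{I}$ ($k\in\{0,1\}$) the endpoint inclusions, and $\varepsilon\colon \mathbb I\to 1$ the unique map. For maps $f\colon X\to Y$, $g\colon X'\to Y'$, the pushout product $f\hat\times g$ is the induced map $(X\times Y')\sqcup_{X\times X'}(Y\times X')\to Y\times Y'$. For $r\colon B\to\mathbb I$ and $f\colon A\to B$, the unbiased mapping cylinder $M_r(f)$ is the pushout of $f \colon A \to B$ and $\langle rf, \mathrm{id}_A\rangle \colon A \to \mathbb{I}\times A$, with induced maps $c_r\colon B\to M_r(f)$,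 $d_r\colon \mathbb I\times A\to M_r(f)$. For a mono $m\colon A\to B$, $r\hat\times_B m\colon M_r(m)\to \mathbb I\times B$ is the unique map restricting to $\langle r,\mathrm{id}_B\rangle$ on $B$ and to $\mathbb I\times m$ on $\mathbb I\times A$. *)

theory Defs
  imports Main "HOL-Library.FuncSet"
begin

text \<open>The object [1]^n is represented by the set of boolean lists of length n,
  with pointwise disjunction as join (0 = False < 1 = True, join = max).\<close>

definition cube :: "nat \<Rightarrow> bool list set" where
  "cube n = {xs. length xs = n}"

definition join :: "bool list \<Rightarrow> bool list \<Rightarrow> bool list" where
  "join xs ys = map2 (\<or>) xs ys"

definition shom :: "nat \<Rightarrow> nat \<Rightarrow> (bool list \<Rightarrow> bool list) set" where
  "shom m n = {f. f \<in> extensional (cube m) \<and> f \<in> cube m \<rightarrow> cube n \<and>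
      (\<forall>x\<in>cube m. \<forall>y\<in>cube m. f (join x y) = join (f x) (f y))}"

definition cid :: "nat \<Rightarrow> bool list \<Rightarrow> bool list" where
  "cid n = restrict id (cube n)"

text \<open>A presheaf: sets F([1]^n) and restriction maps F(f) : F([1]^n) \<rightarrow> F([1]^m)
  for f : [1]^m \<rightarrow> [1]^n (written act F m n f).\<close>

record 'a psh =
  obj :: "nat \<Rightarrow> 'a set"
  act :: "nat \<Rightarrow> nat \<Rightarrow> (bool list \<Rightarrow> bool list) \<Rightarrow> 'a \<Rightarrow> 'a"

definition is_psh :: "'a psh \<Rightarrow> bool" where
  "is_psh F \<longleftrightarrow>
     (\<forall>m n f x. f \<in> shom m n \<longrightarrow> x \<in> obj F n \<longrightarrow> act F m n f x \<in> obj F m) \<and>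
     (\<forall>n x. x \<in> obj F n \<longrightarrow> act F n n (cid n) x = x) \<and>
     (\<forall>l m n f g x. f \<in> shom l m \<longrightarrow> g \<in> shom m n \<longrightarrow> x \<in> obj F n \<longrightarrow>
         act F l n (compose (cube l) g f) x = act F l m f (act F m n g x))"

definition is_map :: "'a psh \<Rightarrow> 'b psh \<Rightarrow> (nat \<Rightarrow> 'a \<Rightarrow> 'b) \<Rightarrow> bool" where
  "is_map F G \<alpha> \<longleftrightarrow>
     (\<forall>n x. x \<in> obj F n \<longrightarrow> \<alpha> n x \<in> obj G n) \<and>
     (\<forall>m n f x. f \<in> shom m n \<longrightarrow> x \<in> obj F n \<longrightarrow>
         \<alpha> m (act F m n f x) = act G m n f (\<alpha> n x))"

definition is_mono :: "'a psh \<Rightarrow> 'b psh \<Rightarrow> (nat \<Rightarrow> 'a \<Rightarrow> 'b) \<Rightarrow> bool" where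
  "is_mono F G \<alpha> \<longleftrightarrow> is_map F G \<alpha> \<and> (\<forall>n. inj_on (\<alpha> n) (obj F n))"

definition llp :: "'a psh \<Rightarrow> 'b psh \<Rightarrow> (nat \<Rightarrow> 'a \<Rightarrow> 'b) \<Rightarrow>
                   'x psh \<Rightarrow> 'y psh \<Rightarrow> (nat \<Rightarrow> 'x \<Rightarrow> 'y) \<Rightarrow> bool" where
  "llp A B f X Y p \<longleftrightarrow>
     (\<forall>u v. is_map A X u \<longrightarrow> is_map B Y v \<longrightarrow>
        (\<forall>n a. a \<in> obj A n \<longrightarrow> p n (u n a) = v n (f n a)) \<longrightarrow>
        (\<exists>d. is_map B X d \<and>
             (\<forall>n a. a \<in> obj A n \<longrightarrow> d n (f n a) = u n a) \<and>
             (\<forall>n b. b \<in> obj B n \<longrightarrow> p n (d n b) = v n b)))"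

text \<open>The interval: the representable presheaf on [1].\<close>

definition Ipsh :: "(bool list \<Rightarrow> bool list) psh" where
  "Ipsh = \<lparr>obj = (\<lambda>n. shom n 1), act = (\<lambda>m n f g. compose (cube m) g f)\<rparr>"

definition term_psh :: "unit psh" where
  "term_psh = \<lparr>obj = (\<lambda>n. {()}), act = (\<lambda>m n f x. x)\<rparr>"

text \<open>Endpoint inclusions delta_k : 1 \<rightarrow> I (k = False for 0, k = True for 1).\<close>

definition delta :: "bool \<Rightarrow> nat \<Rightarrow> unit \<Rightarrow> (bool list \<Rightarrow> bool list)" where
  "delta k n u = restrict (\<lambda>_. [k]) (cube n)"

definition prod_psh :: "'a psh \<Rightarrow> 'b psh \<Rightarrow> ('a \<times> 'b) psh" where
  "prod_psh F G = \<lparr>obj = (\<lambda>n. obj F n \<times> obj G n),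
      act = (\<lambda>m n f xy. (act F m n f (fst xy), act G m n f (snd xy)))\<rparr>"

text \<open>Pushout of f : C \<rightarrow> A and g : C \<rightarrow> B, computed levelwise as a quotient
  of the disjoint union by the equivalence relation generated by f c ~ g c.\<close>

definition po_rel :: "'c psh \<Rightarrow> 'a psh \<Rightarrow> 'b psh \<Rightarrow> (nat \<Rightarrow> 'c \<Rightarrow> 'a) \<Rightarrow> (nat \<Rightarrow> 'c \<Rightarrow> 'b)
                      \<Rightarrow> nat \<Rightarrow> (('a + 'b) \<times> ('a + 'b)) set" where
  "po_rel C A B f g n =
     (let R = {(Inl (f n c), Inr (g n c)) | c. c \<in> obj C n}
      in (R \<union> R\<inverse> \<union> Id_on (obj A n <+> obj B n))\<^sup>*)"

definition pushout :: "'c psh \<Rightarrow> 'a psh \<Rightarrow> 'b psh \<Rightarrow> (nat \<Rightarrow> 'c \<Rightarrow> 'a) \<Rightarrow> (nat \<Rightarrow> 'c \<Rightarrow> 'b)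
                       \<Rightarrow> ('a + 'b) set psh" where
  "pushout C A B f g =
     \<lparr>obj = (\<lambda>n. (obj A n <+> obj B n) // po_rel C A B f g n),
      act = (\<lambda>m n h S. po_rel C A B f g m `` (map_sum (act A m n h) (act B m n h) ` S))\<rparr>"

definition po_copair :: "(nat \<Rightarrow> 'a \<Rightarrow> 'z) \<Rightarrow> (nat \<Rightarrow> 'b \<Rightarrow> 'z) \<Rightarrow> nat \<Rightarrow> ('a + 'b) set \<Rightarrow> 'z" where
  "po_copair h1 h2 n S = the_elem (case_sum (h1 n) (h2 n) ` S)"

text \<open>Pushout product of f : X \<rightarrow> Y and g : X' \<rightarrow> Y':
  (X \<times> Y') \<squnion>_{X \<times> X'} (Y \<times> X') \<rightarrow> Y \<times> Y'.\<close>

definition pp_dom :: "'x psh \<Rightarrow> 'y psh \<Rightarrow> (nat \<Rightarrow> 'x \<Rightarrow> 'y) \<Rightarrow>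
                      'x2 psh \<Rightarrow> 'y2 psh \<Rightarrow> (nat \<Rightarrow> 'x2 \<Rightarrow> 'y2) \<Rightarrow>
                      (('x \<times> 'y2) + ('y \<times> 'x2)) set psh" where
  "pp_dom X Y f X' Y' g =
     pushout (prod_psh X X') (prod_psh X Y') (prod_psh Y X')
       (\<lambda>n xx. (fst xx, g n (snd xx))) (\<lambda>n xx. (f n (fst xx), snd xx))"

definition pp_map :: "(nat \<Rightarrow> 'x \<Rightarrow> 'y) \<Rightarrow> (nat \<Rightarrow> 'x2 \<Rightarrow> 'y2) \<Rightarrow>
                      nat \<Rightarrow> (('x \<times> 'y2) + ('y \<times> 'x2)) set \<Rightarrow> 'y \<times> 'y2" where
  "pp_map f g = po_copair (\<lambda>n xy. (f n (fst xy), snd xy)) (\<lambda>n yx. (fst yx, g n (snd yx)))"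

text \<open>Unbiased mapping cylinder M_r(m): pushout of m : A \<rightarrow> B and
  \<langle>r m, id\<rangle> : A \<rightarrow> I \<times> A; and the map r \<times>_B m : M_r(m) \<rightarrow> I \<times> B.\<close>

definition mcyl :: "'a psh \<Rightarrow> 'b psh \<Rightarrow> (nat \<Rightarrow> 'b \<Rightarrow> (bool list \<Rightarrow> bool list)) \<Rightarrow>
                    (nat \<Rightarrow> 'a \<Rightarrow> 'b) \<Rightarrow> ('b + ((bool list \<Rightarrow> bool list) \<times> 'a)) set psh" where
  "mcyl A B r m = pushout A B (prod_psh Ipsh A) m (\<lambda>n a. (r n (m n a), a))"

definition mcyl_map :: "(nat \<Rightarrow> 'b \<Rightarrow> (bool list \<Rightarrow> bool list)) \<Rightarrow> (nat \<Rightarrow> 'a \<Rightarrow> 'b) \<Rightarrow>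
                        nat \<Rightarrow> ('b + ((bool list \<Rightarrow> bool list) \<times> 'a)) set \<Rightarrow>
                        (bool list \<Rightarrow> bool list) \<times> 'b" where
  "mcyl_map r m = po_copair (\<lambda>n b. (r n b, b)) (\<lambda>n ia. (fst ia, m n (snd ia)))"

text \<open>The presheaves A', B' range over
  presheaves valued in subsets of a universe type 'u.\<close>

definition is_fibration :: "'u itself \<Rightarrow> 'x psh \<Rightarrow> 'y psh \<Rightarrow> (nat \<Rightarrow> 'x \<Rightarrow> 'y) \<Rightarrow> bool" where
  "is_fibration (U :: 'u itself) X Y p \<longleftrightarrow> is_map X Y p \<and>
     (\<forall>k (A' :: 'u psh) (B' :: 'u psh) m'. is_psh A' \<longrightarrow> is_psh B' \<longrightarrow> is_mono A' B' m' \<longrightarrow>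
        llp (pp_dom term_psh Ipsh (delta k) A' B' m') (prod_psh Ipsh B')
            (pp_map (delta k) m') X Y p)"

end

theory Submission
  imports Defs "HOL-Library.Countable_Set"
begin

text \<open>A square from \<open>r \<times>\<^sub>B m\<close> to a fibration \<open>p\<close> is filled in two steps.  First,
  lifting against \<open>\<delta>\<^sub>0 \<times> (m A \<subseteq> B)\<close> deforms \<open>u \<circ> c\<^sub>r\<close> along the homotopy
  \<open>(t, b) \<mapsto> (r b \<or> t, b)\<close>, giving \<open>g : \<I> \<times> B \<rightarrow> X\<close> with \<open>g(0, -) = u \<circ> c\<^sub>r\<close> and
  \<open>g(t, m a) = u (d\<^sub>r (r (m a) \<or> t, a))\<close>.  Second, the image \<open>S \<subseteq> \<I> \<times> B\<close> of \<open>r \<times>\<^sub>B m\<close>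
  consists of the pairs \<open>(r b, b)\<close> and \<open>(s, m a)\<close>; lifting against \<open>\<delta>\<^sub>1 \<times> (S \<subseteq> \<I> \<times> B)\<close>
  the square over \<open>(t, s, b) \<mapsto> v (s \<or> t, b)\<close> that is \<open>g(1, b)\<close> at \<open>t = 1\<close>, \<open>g(t, b)\<close> at
  \<open>s = r b\<close> and \<open>u (d\<^sub>r (s \<or> t, a))\<close> at \<open>b = m a\<close> yields a cube whose face \<open>t = 0\<close> is the
  required diagonal.

  The fibration condition only covers presheaves valued in a universe \<open>'u\<close> that is merely
  infinite.  Lifting problems against \<open>\<delta>\<^sub>k \<times> (S \<subseteq> B)\<close> for arbitrary \<open>B\<close> are therefore solved
  by Zorn's lemma, extending partial fillers one subpresheaf generated by a single element at a
  time: such a subpresheaf is countable, as \<open>\<square>\<^sub>\<or>\<close> has finite hom-sets.\<close>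

type_synonym cmor = "bool list \<Rightarrow> bool list"

lemma cube_iff [simp]: "x \<in> cube n \<longleftrightarrow> length x = n"
  by (simp add: cube_def)

lemma join_in_cube: "x \<in> cube n \<Longrightarrow> y \<in> cube n \<Longrightarrow> join x y \<in> cube n"
  by (simp add: join_def)

lemma cube_1_singleton: "x \<in> cube 1 \<Longrightarrow> \<exists>a. x = [a]"
  by (cases x) auto

lemma join_singletons [simp]: "join [a] [b] = [a \<or> b]"
  by (simp add: join_def)

lemma finite_cube: "finite (cube n)"
  using finite_lists_length_eq[of "UNIV :: bool set" n] by (simp add: cube_def)

lemma shomD:
  assumes "f \<in> shom m n"
  shows "f \<in> extensional (cube m)" "\<And>x. x \<in> cube m \<Longrightarrow> f x \<in> cube n"
    "\<And>x y. x \<in> cube m \<Longrightarrow> y \<in> cube m \<Longrightarrow> f (join x y) = join (f x) (f y)"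
  using assms by (auto simp: shom_def simp del: cube_iff)

lemma finite_shom: "finite (shom m n)"
proof (rule finite_subset)
  show "shom m n \<subseteq> (\<Pi>\<^sub>E x \<in> cube m. cube n)"
    unfolding shom_def PiE_def by auto
  show "finite (\<Pi>\<^sub>E x \<in> cube m. cube n)"
    by (intro finite_PiE finite_cube)
qed

lemma shom_compose:
  assumes "f \<in> shom l m" "g \<in> shom m n"
  shows "compose (cube l) g f \<in> shom l n"
  using shomD[OF assms(1)] shomD[OF assms(2)]
  unfolding shom_def by (auto simp: compose_def join_in_cube simp del: cube_iff)

lemma shom_cid: "cid n \<in> shom n n"
  by (auto simp: cid_def shom_def join_in_cube simp del: cube_iff)

lemma compose_cid: "g \<in> extensional (cube n) \<Longrightarrow> compose (cube n) g (cid n) = g"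
  by (rule extensionalityI[where A="cube n"]) (auto simp: compose_def cid_def simp del: cube_iff)

lemma compose_cube_assoc:
  assumes "f \<in> shom l m"
  shows "compose (cube l) h (compose (cube l) g f) = compose (cube l) (compose (cube m) h g) f"
  using shomD(2)[OF assms] by (auto simp: compose_def simp del: cube_iff)

lemma obj_Ipsh [simp]: "obj Ipsh n = shom n 1"
  by (simp add: Ipsh_def)

lemma act_Ipsh [simp]: "act Ipsh m n f g = compose (cube m) g f"
  by (simp add: Ipsh_def)

lemma obj_prod_psh [simp]: "obj (prod_psh F G) n = obj F n \<times> obj G n"
  by (simp add: prod_psh_def)

lemma act_prod_psh [simp]:
  "act (prod_psh F G) m n f xy = (act F m n f (fst xy), act G m n f (snd xy))"
  by (simp add: prod_psh_def)

lemma obj_term_psh [simp]: "obj term_psh n = {()}"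
  by (simp add: term_psh_def)

lemma act_term_psh [simp]: "act term_psh m n f x = x"
  by (simp add: term_psh_def)

lemma is_psh_Ipsh: "is_psh Ipsh"
  unfolding is_psh_def
  by (auto simp: shom_compose shom_cid compose_cid shomD(1) compose_cube_assoc)

lemma is_psh_term_psh: "is_psh term_psh"
  unfolding is_psh_def by auto

lemma is_psh_prod_psh: "is_psh F \<Longrightarrow> is_psh G \<Longrightarrow> is_psh (prod_psh F G)"
  unfolding is_psh_def by auto

lemma is_psh_act_closed: "is_psh F \<Longrightarrow> f \<in> shom m n \<Longrightarrow> x \<in> obj F n \<Longrightarrow> act F m n f x \<in> obj F m"
  unfolding is_psh_def by blast

lemma is_psh_act_cid: "is_psh F \<Longrightarrow> x \<in> obj F n \<Longrightarrow> act F n n (cid n) x = x"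
  unfolding is_psh_def by blast

lemma is_psh_act_compose:
  "is_psh F \<Longrightarrow> f \<in> shom l m \<Longrightarrow> g \<in> shom m n \<Longrightarrow> x \<in> obj F n \<Longrightarrow>
     act F l n (compose (cube l) g f) x = act F l m f (act F m n g x)"
  unfolding is_psh_def by blast

lemma is_map_obj: "is_map F G \<alpha> \<Longrightarrow> x \<in> obj F n \<Longrightarrow> \<alpha> n x \<in> obj G n"
  unfolding is_map_def by blast

lemma is_map_act:
  "is_map F G \<alpha> \<Longrightarrow> f \<in> shom m n \<Longrightarrow> x \<in> obj F n \<Longrightarrow> \<alpha> m (act F m n f x) = act G m n f (\<alpha> n x)"
  unfolding is_map_def by blast

lemma is_map_comp: "is_map F G \<alpha> \<Longrightarrow> is_map G H \<beta> \<Longrightarrow> is_map F H (\<lambda>n x. \<beta> n (\<alpha> n x))"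
  unfolding is_map_def by simp

lemma delta_shom [simp]: "delta k n u \<in> shom n 1"
  by (auto simp: delta_def shom_def join_def)

lemma compose_delta [simp]: "f \<in> shom m n \<Longrightarrow> compose (cube m) (delta k n u) f = delta k m u"
  using shomD(2)[of f m n] by (auto simp: delta_def compose_def simp del: cube_iff)

definition ijoin :: "nat \<Rightarrow> cmor \<Rightarrow> cmor \<Rightarrow> cmor" where
  "ijoin n f g = restrict (\<lambda>x. join (f x) (g x)) (cube n)"

lemma ijoin_shom [simp]:
  assumes "f \<in> shom n 1" "g \<in> shom n 1"
  shows "ijoin n f g \<in> shom n 1"
proof -
  have "join (join (f x) (g x)) (join (f y) (g y)) = join (join (f x) (f y)) (join (g x) (g y))"
    if "x \<in> cube n" "y \<in> cube n" for x y
    using cube_1_singleton[OF shomD(2)[OF assms(1) that(1)]] cube_1_singleton[OF shomD(2)[OF assms(1) that(2)]]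
      cube_1_singleton[OF shomD(2)[OF assms(2) that(1)]] cube_1_singleton[OF shomD(2)[OF assms(2) that(2)]]
    by auto
  then show ?thesis
    using shomD[OF assms(1)] shomD[OF assms(2)]
    unfolding shom_def ijoin_def by (auto simp: join_in_cube simp del: cube_iff)
qed

text \<open>The simplifier rewrites \<open>1 :: nat\<close> to \<open>Suc 0\<close>, so the membership rules are
  also needed in that form.\<close>

lemmas delta_shom_Suc0 [simp] = delta_shom[simplified]
  and ijoin_shom_Suc0 [simp] = ijoin_shom[simplified]

lemma compose_ijoin:
  assumes "h \<in> shom l n"
  shows "compose (cube l) (ijoin n f g) h = ijoin l (compose (cube l) f h) (compose (cube l) g h)"
  using shomD(2)[OF assms] by (auto simp: ijoin_def compose_def simp del: cube_iff)

lemma ijoin_delta [simp]: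
  assumes "f \<in> shom n 1"
  shows ijoin_delta_False: "ijoin n f (delta False n u) = f"
    and ijoin_delta_True: "ijoin n f (delta True n u) = delta True n u"
proof -
  have pointwise: "ijoin n f (delta k n u) x = (if k then delta True n u x else f x)" if "x \<in> cube n" for k x
    using cube_1_singleton[OF shomD(2)[OF assms that]] that by (auto simp: ijoin_def delta_def)
  show "ijoin n f (delta False n u) = f"
    by (rule extensionalityI[where A="cube n"]) (use pointwise shomD(1)[OF assms] in \<open>auto simp: ijoin_def\<close>)
  show "ijoin n f (delta True n u) = delta True n u"
    by (rule extensionalityI[where A="cube n"]) (use pointwise in \<open>auto simp: ijoin_def delta_def\<close>)
qed

section \<open>Pushouts\<close>

lemma po_rel_refl: "(x, x) \<in> po_rel C A B f g n"
  unfolding po_rel_def Let_def by simp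

lemma po_rel_generator: "c \<in> obj C n \<Longrightarrow> (Inl (f n c), Inr (g n c)) \<in> po_rel C A B f g n"
  unfolding po_rel_def Let_def by (rule r_into_rtrancl) blast

lemma sym_po_rel: "sym (po_rel C A B f g n)"
  unfolding po_rel_def Let_def by (rule sym_rtrancl) (auto simp: sym_def)

lemma trans_po_rel: "trans (po_rel C A B f g n)"
  unfolding po_rel_def Let_def by (rule trans_rtrancl)

lemma po_rel_class_eq:
  "(x, y) \<in> po_rel C A B f g n \<Longrightarrow> po_rel C A B f g n `` {x} = po_rel C A B f g n `` {y}"
  using sym_po_rel[of C A B f g n] trans_po_rel[of C A B f g n]
  unfolding sym_def trans_def by blast

lemma po_rel_act:
  assumes "is_psh C" "is_map C A f" "is_map C B g" "h \<in> shom m n"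
    and "(x, y) \<in> po_rel C A B f g n"
  shows "(map_sum (act A m n h) (act B m n h) x, map_sum (act A m n h) (act B m n h) y)
           \<in> po_rel C A B f g m"
  using assms(5) unfolding po_rel_def Let_def
proof (induction rule: rtrancl_induct)
  case base
  then show ?case by simp
next
  case (step y z)
  let ?F = "map_sum (act A m n h) (act B m n h)"
  let ?R = "{(Inl (f m c), Inr (g m c)) | c. c \<in> obj C m}"
  have generator: "(?F (Inl (f n c)), ?F (Inr (g n c))) \<in> ?R" if "c \<in> obj C n" for c
    using that is_psh_act_closed[OF assms(1,4)] is_map_act[OF assms(2,4)] is_map_act[OF assms(3,4)]
    by force
  from step.hyps(2) have "(?F y, ?F z) \<in> (?R \<union> ?R\<inverse> \<union> Id_on (obj A m <+> obj B m))\<^sup>*"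
    using generator by auto
  then show ?case using step.IH by (rule rtrancl_trans[rotated])
qed

lemma po_rel_copair_eq:
  assumes "\<And>c. c \<in> obj C n \<Longrightarrow> hl n (f n c) = hr n (g n c)"
    and "(x, y) \<in> po_rel C A B f g n"
  shows "case_sum (hl n) (hr n) x = case_sum (hl n) (hr n) y"
  using assms(2) unfolding po_rel_def Let_def
proof (induction rule: rtrancl_induct)
  case (step y z)
  then show ?case using assms(1) by auto
qed simp

lemma pushout_class_in_obj:
  "x \<in> obj A n <+> obj B n \<Longrightarrow> po_rel C A B f g n `` {x} \<in> obj (pushout C A B f g) n"
  unfolding pushout_def by (simp add: quotientI)

lemma pushout_obj_cases:
  assumes "S \<in> obj (pushout C A B f g) n"
  obtains x where "x \<in> obj A n <+> obj B n" "S = po_rel C A B f g n `` {x}"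
  using assms unfolding pushout_def by (auto elim!: quotientE)

lemma act_pushout_class:
  assumes "is_psh C" "is_map C A f" "is_map C B g" "h \<in> shom m n"
  shows "act (pushout C A B f g) m n h (po_rel C A B f g n `` {x})
       = po_rel C A B f g m `` {map_sum (act A m n h) (act B m n h) x}"
proof -
  let ?F = "map_sum (act A m n h) (act B m n h)"
  let ?r = "po_rel C A B f g"
  have "?r m `` (?F ` (?r n `` {x})) \<subseteq> ?r m `` {?F x}"
    using po_rel_act[OF assms] trans_po_rel[of C A B f g m] unfolding trans_def by blast
  moreover have "?r m `` {?F x} \<subseteq> ?r m `` (?F ` (?r n `` {x}))"
    using po_rel_refl[of x C A B f g n] by blast
  ultimately show ?thesis unfolding pushout_def by simp
qed

lemma po_copair_class:
  assumes "\<And>c. c \<in> obj C n \<Longrightarrow> hl n (f n c) = hr n (g n c)"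
  shows "po_copair hl hr n (po_rel C A B f g n `` {x}) = case_sum (hl n) (hr n) x"
proof -
  have "case_sum (hl n) (hr n) y = case_sum (hl n) (hr n) x" if "(x, y) \<in> po_rel C A B f g n" for y
    using po_rel_copair_eq[where hl=hl and hr=hr, OF assms that] by simp
  then have "case_sum (hl n) (hr n) ` (po_rel C A B f g n `` {x}) = {case_sum (hl n) (hr n) x}"
    using po_rel_refl[of x C A B f g n] by blast
  then show ?thesis unfolding po_copair_def by simp
qed

lemma is_map_po_copair:
  assumes "is_psh C" "is_map C A f" "is_map C B g" "is_map A Z hl" "is_map B Z hr"
    and "\<And>n c. c \<in> obj C n \<Longrightarrow> hl n (f n c) = hr n (g n c)"
  shows "is_map (pushout C A B f g) Z (po_copair hl hr)"
proof -
  have copair_class: "po_copair hl hr k (po_rel C A B f g k `` {x}) = case_sum (hl k) (hr k) x" for k x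
    by (rule po_copair_class) (rule assms(6))
  show ?thesis
    unfolding is_map_def
  proof (intro conjI allI impI)
    fix n S assume "S \<in> obj (pushout C A B f g) n"
    then obtain x where x: "x \<in> obj A n <+> obj B n" "S = po_rel C A B f g n `` {x}"
      by (rule pushout_obj_cases)
    show "po_copair hl hr n S \<in> obj Z n"
      unfolding x(2) copair_class
      using x(1) is_map_obj[OF assms(4)] is_map_obj[OF assms(5)] by auto
  next
    fix m n h S assume h: "h \<in> shom m n" and "S \<in> obj (pushout C A B f g) n"
    from this(2) obtain x where x: "x \<in> obj A n <+> obj B n" "S = po_rel C A B f g n `` {x}"
      by (rule pushout_obj_cases)
    show "po_copair hl hr m (act (pushout C A B f g) m n h S) = act Z m n h (po_copair hl hr n S)"
      unfolding x(2) act_pushout_class[OF assms(1-3) h] copair_class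
      using x(1) is_map_act[OF assms(4) h] is_map_act[OF assms(5) h] by auto
  qed
qed

section \<open>Lifting problems against \<open>\<delta>\<^sub>k \<times> (S \<subseteq> B)\<close>\<close>

definition subpsh :: "'a psh \<Rightarrow> (nat \<Rightarrow> 'a set) \<Rightarrow> 'a psh" where
  "subpsh B T = \<lparr>obj = T, act = act B\<rparr>"

definition is_subpsh :: "'a psh \<Rightarrow> (nat \<Rightarrow> 'a set) \<Rightarrow> bool" where
  "is_subpsh B T \<longleftrightarrow> (\<forall>n. T n \<subseteq> obj B n) \<and>
     (\<forall>m n f x. f \<in> shom m n \<longrightarrow> x \<in> T n \<longrightarrow> act B m n f x \<in> T m)"

lemma obj_subpsh [simp]: "obj (subpsh B T) = T"
  by (simp add: subpsh_def)

lemma act_subpsh [simp]: "act (subpsh B T) = act B"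
  by (simp add: subpsh_def)

lemma subpsh_obj [simp]: "subpsh B (obj B) = B"
  by (simp add: subpsh_def)

lemma subpsh_subpsh [simp]: "subpsh (subpsh B G) T = subpsh B T"
  by (simp add: subpsh_def)

lemma is_subpshD:
  assumes "is_subpsh B T"
  shows "\<And>n x. x \<in> T n \<Longrightarrow> x \<in> obj B n"
    and "\<And>m n f x. f \<in> shom m n \<Longrightarrow> x \<in> T n \<Longrightarrow> act B m n f x \<in> T m"
  using assms unfolding is_subpsh_def by blast+

lemma is_subpsh_obj: "is_psh B \<Longrightarrow> is_subpsh B (obj B)"
  unfolding is_subpsh_def is_psh_def by blast

lemma is_psh_subpsh: "is_psh B \<Longrightarrow> is_subpsh B T \<Longrightarrow> is_psh (subpsh B T)"
  unfolding is_psh_def is_subpsh_def by (simp add: subset_iff)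

lemma is_subpsh_image:
  assumes "is_psh A" "is_map A B m"
  shows "is_subpsh B (\<lambda>n. m n ` obj A n)"
  unfolding is_subpsh_def
proof (intro conjI allI impI)
  show "m n ` obj A n \<subseteq> obj B n" for n
    using is_map_obj[OF assms(2)] by blast
  fix l n f x assume f: "f \<in> shom l n" and "x \<in> m n ` obj A n"
  then obtain a where "a \<in> obj A n" "x = m n a" by blast
  then show "act B l n f x \<in> m l ` obj A l"
    using is_map_act[OF assms(2) f] is_psh_act_closed[OF assms(1) f] by (metis image_eqI)
qed

text \<open>A commutative square from \<open>\<delta>\<^sub>k \<times> (S \<subseteq> B)\<close> to \<open>p\<close> is given by its
  restrictions \<open>\<alpha>\<close> to \<open>{k} \<times> B\<close> and \<open>\<beta>\<close> to \<open>\<I> \<times> S\<close>, together with its bottom map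
  \<open>v : \<I> \<times> B \<rightarrow> Y\<close>.  A filler over \<open>T\<close> is a diagonal defined on \<open>\<I> \<times> T\<close> only, for a
  subpresheaf \<open>S \<subseteq> T \<subseteq> B\<close>; the lifts of the square are the fillers over \<open>B\<close>.\<close>

definition pp_problem :: "bool \<Rightarrow> 'b psh \<Rightarrow> (nat \<Rightarrow> 'b set) \<Rightarrow> (nat \<Rightarrow> 'b \<Rightarrow> 'x)
    \<Rightarrow> (nat \<Rightarrow> cmor \<times> 'b \<Rightarrow> 'x) \<Rightarrow> (nat \<Rightarrow> cmor \<times> 'b \<Rightarrow> 'y)
    \<Rightarrow> 'x psh \<Rightarrow> 'y psh \<Rightarrow> (nat \<Rightarrow> 'x \<Rightarrow> 'y) \<Rightarrow> bool" where
  "pp_problem k B S \<alpha> \<beta> v X Y p \<longleftrightarrow> is_psh B \<and> is_subpsh B S \<and> is_map B X \<alpha> \<and>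
     is_map (prod_psh Ipsh (subpsh B S)) X \<beta> \<and>
     (\<forall>n s. s \<in> S n \<longrightarrow> \<beta> n (delta k n (), s) = \<alpha> n s) \<and>
     is_map (prod_psh Ipsh B) Y v \<and>
     (\<forall>n b. b \<in> obj B n \<longrightarrow> p n (\<alpha> n b) = v n (delta k n (), b)) \<and>
     (\<forall>n i s. i \<in> shom n 1 \<longrightarrow> s \<in> S n \<longrightarrow> p n (\<beta> n (i, s)) = v n (i, s))"

definition pp_filler :: "bool \<Rightarrow> 'b psh \<Rightarrow> (nat \<Rightarrow> 'b set) \<Rightarrow> (nat \<Rightarrow> 'b \<Rightarrow> 'x)
    \<Rightarrow> (nat \<Rightarrow> cmor \<times> 'b \<Rightarrow> 'x) \<Rightarrow> (nat \<Rightarrow> cmor \<times> 'b \<Rightarrow> 'y)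
    \<Rightarrow> 'x psh \<Rightarrow> 'y psh \<Rightarrow> (nat \<Rightarrow> 'x \<Rightarrow> 'y) \<Rightarrow> (nat \<Rightarrow> 'b set)
    \<Rightarrow> (nat \<Rightarrow> cmor \<times> 'b \<Rightarrow> 'x) \<Rightarrow> bool" where
  "pp_filler k B S \<alpha> \<beta> v X Y p T d \<longleftrightarrow> is_subpsh B T \<and> (\<forall>n. S n \<subseteq> T n) \<and>
     is_map (prod_psh Ipsh (subpsh B T)) X d \<and>
     (\<forall>n b. b \<in> T n \<longrightarrow> d n (delta k n (), b) = \<alpha> n b) \<and>
     (\<forall>n i s. i \<in> shom n 1 \<longrightarrow> s \<in> S n \<longrightarrow> d n (i, s) = \<beta> n (i, s)) \<and>
     (\<forall>n i b. i \<in> shom n 1 \<longrightarrow> b \<in> T n \<longrightarrow> p n (d n (i, b)) = v n (i, b))"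

lemma pp_problemD:
  assumes "pp_problem k B S \<alpha> \<beta> v X Y p"
  shows "is_psh B" "is_subpsh B S" "is_map B X \<alpha>" "is_map (prod_psh Ipsh (subpsh B S)) X \<beta>"
    and "\<And>n s. s \<in> S n \<Longrightarrow> \<beta> n (delta k n (), s) = \<alpha> n s"
    and "is_map (prod_psh Ipsh B) Y v"
    and "\<And>n b. b \<in> obj B n \<Longrightarrow> p n (\<alpha> n b) = v n (delta k n (), b)"
    and "\<And>n i s. i \<in> shom n 1 \<Longrightarrow> s \<in> S n \<Longrightarrow> p n (\<beta> n (i, s)) = v n (i, s)"
  using assms unfolding pp_problem_def by blast+

lemma pp_fillerD:
  assumes "pp_filler k B S \<alpha> \<beta> v X Y p T d"
  shows "is_subpsh B T" "\<And>n s. s \<in> S n \<Longrightarrow> s \<in> T n"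
    and "is_map (prod_psh Ipsh (subpsh B T)) X d"
    and "\<And>n b. b \<in> T n \<Longrightarrow> d n (delta k n (), b) = \<alpha> n b"
    and "\<And>n i s. i \<in> shom n 1 \<Longrightarrow> s \<in> S n \<Longrightarrow> d n (i, s) = \<beta> n (i, s)"
    and "\<And>n i b. i \<in> shom n 1 \<Longrightarrow> b \<in> T n \<Longrightarrow> p n (d n (i, b)) = v n (i, b)"
  using assms unfolding pp_filler_def by blast+

lemma pp_map_class:
  "pp_map f g n (po_rel (prod_psh X X') (prod_psh X Y') (prod_psh Y X')
       (\<lambda>n xx. (fst xx, g n (snd xx))) (\<lambda>n xx. (f n (fst xx), snd xx)) n `` {x})
     = case_sum (\<lambda>xy. (f n (fst xy), snd xy)) (\<lambda>yx. (fst yx, g n (snd yx))) x"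
  unfolding pp_map_def by (rule po_copair_class) auto

lemma pp_problem_top_class:
  assumes "pp_problem k B S \<alpha> \<beta> v X Y p"
  shows "po_copair (\<lambda>n ty. \<alpha> n (snd ty)) \<beta> n
      (po_rel (prod_psh term_psh (subpsh B S)) (prod_psh term_psh B) (prod_psh Ipsh (subpsh B S))
        (\<lambda>n xx. (fst xx, snd xx)) (\<lambda>n xx. (delta k n (fst xx), snd xx)) n `` {x})
    = case_sum (\<lambda>ty. \<alpha> n (snd ty)) (\<beta> n) x"
  by (rule po_copair_class) (use pp_problemD(5)[OF assms] in auto)

lemma pp_problem_square:
  assumes pr: "pp_problem k B S \<alpha> \<beta> v X Y p"
  shows "is_map (pp_dom term_psh Ipsh (delta k) (subpsh B S) B (\<lambda>n y. y)) X
      (po_copair (\<lambda>n ty. \<alpha> n (snd ty)) \<beta>)"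
    and "\<And>n a. a \<in> obj (pp_dom term_psh Ipsh (delta k) (subpsh B S) B (\<lambda>n y. y)) n \<Longrightarrow>
      p n (po_copair (\<lambda>n ty. \<alpha> n (snd ty)) \<beta> n a) = v n (pp_map (delta k) (\<lambda>n y. y) n a)"
proof -
  note S_sub = is_subpshD(1)[OF pp_problemD(2)[OF pr]]
  have top_B: "is_map (prod_psh term_psh B) X (\<lambda>n ty. \<alpha> n (snd ty))"
    using is_map_obj[OF pp_problemD(3)[OF pr]] is_map_act[OF pp_problemD(3)[OF pr]]
    unfolding is_map_def by auto
  show "is_map (pp_dom term_psh Ipsh (delta k) (subpsh B S) B (\<lambda>n y. y)) X
      (po_copair (\<lambda>n ty. \<alpha> n (snd ty)) \<beta>)"
    unfolding pp_dom_def
    by (rule is_map_po_copair[OF is_psh_prod_psh[OF is_psh_term_psh] _ _ top_B pp_problemD(4)[OF pr]])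
      (use S_sub is_psh_subpsh[OF pp_problemD(1,2)[OF pr]] pp_problemD(5)[OF pr] in \<open>auto simp: is_map_def\<close>)
  fix n a assume "a \<in> obj (pp_dom term_psh Ipsh (delta k) (subpsh B S) B (\<lambda>n y. y)) n"
  then obtain x where x: "x \<in> obj (prod_psh term_psh B) n <+> obj (prod_psh Ipsh (subpsh B S)) n"
    "a = po_rel (prod_psh term_psh (subpsh B S)) (prod_psh term_psh B) (prod_psh Ipsh (subpsh B S))
        (\<lambda>n xx. (fst xx, snd xx)) (\<lambda>n xx. (delta k n (fst xx), snd xx)) n `` {x}"
    unfolding pp_dom_def by (rule pushout_obj_cases)
  show "p n (po_copair (\<lambda>n ty. \<alpha> n (snd ty)) \<beta> n a) = v n (pp_map (delta k) (\<lambda>n y. y) n a)"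
    unfolding x(2) pp_problem_top_class[OF pr] pp_map_class[of "delta k" "\<lambda>n y. y"]
    using x(1) pp_problemD(7,8)[OF pr] by auto
qed

lemma fibration_fills_pp_problem_in_universe:
  fixes B :: "'u psh"
  assumes fib: "is_fibration TYPE('u) X Y p"
    and pr: "pp_problem k B S \<alpha> \<beta> v X Y p"
  shows "\<exists>d. pp_filler k B S \<alpha> \<beta> v X Y p (obj B) d"
proof -
  note S_sub = is_subpshD(1)[OF pp_problemD(2)[OF pr]]
  have "is_mono (subpsh B S) B (\<lambda>n y. y)"
    unfolding is_mono_def is_map_def using S_sub by auto
  then have "llp (pp_dom term_psh Ipsh (delta k) (subpsh B S) B (\<lambda>n y. y)) (prod_psh Ipsh B)
      (pp_map (delta k) (\<lambda>n y. y)) X Y p"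
    using fib pp_problemD(1,2)[OF pr] is_psh_subpsh unfolding is_fibration_def by blast
  then obtain d where d: "is_map (prod_psh Ipsh B) X d"
    and d_top: "\<And>n a. a \<in> obj (pp_dom term_psh Ipsh (delta k) (subpsh B S) B (\<lambda>n y. y)) n \<Longrightarrow>
                   d n (pp_map (delta k) (\<lambda>n y. y) n a) = po_copair (\<lambda>n ty. \<alpha> n (snd ty)) \<beta> n a"
    and d_bot: "\<And>n b. b \<in> obj (prod_psh Ipsh B) n \<Longrightarrow> p n (d n b) = v n b"
    using pp_problem_square[OF pr] pp_problemD(6)[OF pr] unfolding llp_def by blast
  note d_class = d_top[unfolded pp_dom_def, OF pushout_class_in_obj,
      unfolded pp_problem_top_class[OF pr] pp_map_class[of "delta k" "\<lambda>n y. y"]]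
  have "pp_filler k B S \<alpha> \<beta> v X Y p (obj B) d"
    unfolding pp_filler_def
  proof (intro conjI allI impI)
    fix n b assume "b \<in> obj B n"
    then show "d n (delta k n (), b) = \<alpha> n b"
      using d_class[of "Inl ((), b)" n] by auto
  next
    fix n i s assume "i \<in> shom n 1" "s \<in> S n"
    then show "d n (i, s) = \<beta> n (i, s)"
      using d_class[of "Inr (i, s)" n] by auto
  qed (use d d_bot S_sub is_subpsh_obj[OF pp_problemD(1)[OF pr]] in auto)
  then show ?thesis by blast
qed

definition psh_transport :: "(nat \<Rightarrow> 'a \<Rightarrow> 'b) \<Rightarrow> (nat \<Rightarrow> 'b \<Rightarrow> 'a) \<Rightarrow> 'a psh \<Rightarrow> 'b psh" where
  "psh_transport e e' B =
     \<lparr>obj = \<lambda>n. e n ` obj B n, act = \<lambda>m n f y. e m (act B m n f (e' n y))\<rparr>"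

lemma obj_psh_transport [simp]: "obj (psh_transport e e' B) n = e n ` obj B n"
  by (simp add: psh_transport_def)

lemma act_psh_transport [simp]: "act (psh_transport e e' B) m n f y = e m (act B m n f (e' n y))"
  by (simp add: psh_transport_def)

lemma pp_problem_transport:
  assumes inv: "\<And>n x. x \<in> obj B n \<Longrightarrow> e' n (e n x) = x"
    and pr: "pp_problem k B S \<alpha> \<beta> v X Y p"
  shows "pp_problem k (psh_transport e e' B) (\<lambda>n. e n ` S n) (\<lambda>n y. \<alpha> n (e' n y))
           (\<lambda>n iy. \<beta> n (fst iy, e' n (snd iy))) (\<lambda>n iy. v n (fst iy, e' n (snd iy))) X Y p"
proof -
  note B = pp_problemD(1)[OF pr] and S = is_subpshD[OF pp_problemD(2)[OF pr]]
  note \<alpha> = pp_problemD(3)[OF pr] and \<beta> = pp_problemD(4)[OF pr] and v = pp_problemD(6)[OF pr]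
  show ?thesis
    unfolding pp_problem_def is_psh_def is_subpsh_def is_map_def
    using is_psh_act_closed[OF B] is_psh_act_cid[OF B] is_psh_act_compose[OF B] shom_compose
      S inv is_map_obj[OF \<alpha>] is_map_act[OF \<alpha>] is_map_obj[OF \<beta>] is_map_act[OF \<beta>]
      is_map_obj[OF v] is_map_act[OF v] pp_problemD(5,7,8)[OF pr]
    by (auto simp: image_subset_iff)
qed

lemma pp_filler_transport_back:
  assumes inv: "\<And>n x. x \<in> obj B n \<Longrightarrow> e' n (e n x) = x"
    and pr: "pp_problem k B S \<alpha> \<beta> v X Y p"
    and fill: "pp_filler k (psh_transport e e' B) (\<lambda>n. e n ` S n) (\<lambda>n y. \<alpha> n (e' n y))
           (\<lambda>n iy. \<beta> n (fst iy, e' n (snd iy))) (\<lambda>n iy. v n (fst iy, e' n (snd iy))) X Y p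
           (obj (psh_transport e e' B)) d"
  shows "pp_filler k B S \<alpha> \<beta> v X Y p (obj B) (\<lambda>n ib. d n (fst ib, e n (snd ib)))"
proof -
  note B = pp_problemD(1)[OF pr] and S = is_subpshD(1)[OF pp_problemD(2)[OF pr]]
  note d = pp_fillerD(3)[OF fill, simplified]
  have "d m (compose (cube m) i f, e m (act B m n f b)) = act X m n f (d n (i, e n b))"
    if "f \<in> shom m n" "i \<in> shom n 1" "b \<in> obj B n" for m n f i b
    using is_map_act[OF d that(1), of "(i, e n b)"] that inv by simp
  then show ?thesis
    unfolding pp_filler_def is_map_def
    using is_subpsh_obj[OF B] is_psh_act_closed[OF B] S inv is_map_obj[OF d]
      pp_fillerD(4-6)[OF fill]
    by auto
qed

lemma countable_inj_on_infinite_type: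
  assumes "infinite (UNIV :: 'u set)" "countable (Z :: 'a set)"
  obtains e :: "'a \<Rightarrow> 'u" where "inj_on e Z"
proof -
  obtain f :: "nat \<Rightarrow> 'u" where "inj f"
    using infinite_countable_subset[OF assms(1)] by blast
  then have "inj_on (f \<circ> to_nat_on Z) Z"
    using inj_on_to_nat_on[OF assms(2)] by (simp add: comp_inj_on inj_on_subset)
  then show thesis by (rule that)
qed

lemma fibration_fills_countable_pp_problem:
  fixes B :: "'b psh"
  assumes inf: "infinite (UNIV :: 'u set)"
    and fib: "is_fibration TYPE('u) X Y p"
    and pr: "pp_problem k B S \<alpha> \<beta> v X Y p"
    and countable: "\<And>n. countable (obj B n)"
  shows "\<exists>d. pp_filler k B S \<alpha> \<beta> v X Y p (obj B) d"
proof -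
  have "\<forall>n. \<exists>e :: 'b \<Rightarrow> 'u. inj_on e (obj B n)"
    using countable_inj_on_infinite_type[OF inf countable] by metis
  then obtain e :: "nat \<Rightarrow> 'b \<Rightarrow> 'u" where "\<And>n. inj_on (e n) (obj B n)"
    by metis
  define e' where "e' n = inv_into (obj B n) (e n)" for n
  have inv: "\<And>n x. x \<in> obj B n \<Longrightarrow> e' n (e n x) = x"
    using \<open>\<And>n. inj_on (e n) (obj B n)\<close> by (simp add: e'_def)
  show ?thesis
    using fibration_fills_pp_problem_in_universe[OF fib pp_problem_transport[where e=e and e'=e', OF inv pr]]
      pp_filler_transport_back[where e=e and e'=e', OF inv pr] by blast
qed

section \<open>Extending partial fillers\<close>

lemma pp_filler_base: "pp_problem k B S \<alpha> \<beta> v X Y p \<Longrightarrow> pp_filler k B S \<alpha> \<beta> v X Y p S \<beta>"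
  unfolding pp_problem_def pp_filler_def by blast

lemma pp_filler_of_subpsh:
  assumes "is_subpsh B G" "pp_filler k (subpsh B G) S \<alpha> \<beta> v X Y p T d"
  shows "pp_filler k B S \<alpha> \<beta> v X Y p T d"
  using assms unfolding pp_filler_def is_subpsh_def by (simp add: subset_iff)

lemma pp_problem_restrict:
  assumes "pp_problem k B S \<alpha> \<beta> v X Y p" "pp_filler k B S \<alpha> \<beta> v X Y p T d" "is_subpsh B G"
  shows "pp_problem k (subpsh B G) (\<lambda>l. T l \<inter> G l) \<alpha> d v X Y p"
proof -
  note B = pp_problemD[OF assms(1)] and d = pp_fillerD[OF assms(2)]
    and G = is_subpshD[OF assms(3)]
  show ?thesis
    unfolding pp_problem_def
  proof (intro conjI)
    show "is_psh (subpsh B G)" by (rule is_psh_subpsh[OF B(1) assms(3)])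
    show "is_subpsh (subpsh B G) (\<lambda>l. T l \<inter> G l)"
      using is_subpshD(2)[OF d(1)] G(2) unfolding is_subpsh_def by auto
    show "is_map (subpsh B G) X \<alpha>"
      using is_map_obj[OF B(3)] is_map_act[OF B(3)] G(1) unfolding is_map_def by auto
    show "is_map (prod_psh Ipsh (subpsh (subpsh B G) (\<lambda>l. T l \<inter> G l))) X d"
      using is_map_obj[OF d(3)] is_map_act[OF d(3)] unfolding is_map_def by auto
    show "is_map (prod_psh Ipsh (subpsh B G)) Y v"
      using is_map_obj[OF B(6)] is_map_act[OF B(6)] G(1) unfolding is_map_def by auto
  qed (use B(7) d(4,6) G(1) in auto)
qed

lemma pp_filler_glue:
  assumes "pp_filler k B S \<alpha> \<beta> v X Y p T d" "pp_filler k B (\<lambda>l. T l \<inter> G l) \<alpha> d v X Y p G d'"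
  shows "pp_filler k B S \<alpha> \<beta> v X Y p (\<lambda>l. T l \<union> G l) (\<lambda>l ib. if snd ib \<in> T l then d l ib else d' l ib)"
proof -
  note d = pp_fillerD[OF assms(1)] and d' = pp_fillerD[OF assms(2)]
  have "is_subpsh B (\<lambda>l. T l \<union> G l)"
    using d(1) d'(1) unfolding is_subpsh_def by blast
  moreover have
    "is_map (prod_psh Ipsh (subpsh B (\<lambda>l. T l \<union> G l))) X (\<lambda>l ib. if snd ib \<in> T l then d l ib else d' l ib)"
    unfolding is_map_def
  proof (intro conjI allI impI)
    fix l ib assume "ib \<in> obj (prod_psh Ipsh (subpsh B (\<lambda>l. T l \<union> G l))) l"
    then show "(if snd ib \<in> T l then d l ib else d' l ib) \<in> obj X l"
      using is_map_obj[OF d(3), of ib] is_map_obj[OF d'(3), of ib] by auto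
  next
    fix m l f ib assume f: "f \<in> shom m l" and ib: "ib \<in> obj (prod_psh Ipsh (subpsh B (\<lambda>l. T l \<union> G l))) l"
    show "(if snd (act (prod_psh Ipsh (subpsh B (\<lambda>l. T l \<union> G l))) m l f ib) \<in> T m
             then d m (act (prod_psh Ipsh (subpsh B (\<lambda>l. T l \<union> G l))) m l f ib)
             else d' m (act (prod_psh Ipsh (subpsh B (\<lambda>l. T l \<union> G l))) m l f ib))
          = act X m l f (if snd ib \<in> T l then d l ib else d' l ib)"
    proof (cases "snd ib \<in> T l")
      case True
      then show ?thesis
        using ib is_map_act[OF d(3) f, of ib] is_subpshD(2)[OF d(1) f] by auto
    next
      case False
      then have "snd ib \<in> G l" using ib by auto
      then show ?thesis
        using False ib is_map_act[OF d'(3) f, of ib] is_subpshD(2)[OF d'(1) f]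
          d'(5)[OF shom_compose[OF f]] by auto
    qed
  qed
  ultimately show ?thesis
    unfolding pp_filler_def using d(2,4-6) d'(4,6) by auto
qed

definition generated_subpsh :: "'a psh \<Rightarrow> nat \<Rightarrow> 'a \<Rightarrow> nat \<Rightarrow> 'a set" where
  "generated_subpsh B n x l = (\<lambda>f. act B l n f x) ` shom l n"

lemma is_subpsh_generated:
  assumes "is_psh B" "x \<in> obj B n"
  shows "is_subpsh B (generated_subpsh B n x)"
  unfolding is_subpsh_def generated_subpsh_def
proof (intro conjI allI impI subsetI)
  fix l y assume "y \<in> (\<lambda>f. act B l n f x) ` shom l n"
  then show "y \<in> obj B l" using is_psh_act_closed[OF assms(1) _ assms(2)] by auto
next
  fix m l h y assume h: "h \<in> shom m l" and "y \<in> (\<lambda>f. act B l n f x) ` shom l n"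
  then obtain f where f: "f \<in> shom l n" "y = act B l n f x" by blast
  have "act B m l h y = act B m n (compose (cube m) f h) x"
    using is_psh_act_compose[OF assms(1) h f(1) assms(2)] f(2) by simp
  then show "act B m l h y \<in> (\<lambda>f. act B m n f x) ` shom m n"
    using shom_compose[OF h f(1)] by blast
qed

lemma generated_subpsh_self: "is_psh B \<Longrightarrow> x \<in> obj B n \<Longrightarrow> x \<in> generated_subpsh B n x n"
  unfolding generated_subpsh_def using is_psh_act_cid shom_cid by force

lemma countable_generated_subpsh: "countable (generated_subpsh B n x l)"
  unfolding generated_subpsh_def by (intro countable_finite finite_imageI finite_shom)

definition filler_graph :: "(nat \<Rightarrow> 'b set) \<Rightarrow> (nat \<Rightarrow> cmor \<times> 'b \<Rightarrow> 'x)
    \<Rightarrow> (nat \<times> (cmor \<times> 'b) \<times> 'x) set" where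
  "filler_graph T d = {(n, (i, b), d n (i, b)) | n i b. i \<in> shom n 1 \<and> b \<in> T n}"

lemma filler_graph_iff:
  "(n, (i, b), x) \<in> filler_graph T d \<longleftrightarrow> i \<in> shom n 1 \<and> b \<in> T n \<and> x = d n (i, b)"
  unfolding filler_graph_def by auto

lemma filler_graph_subsetD:
  assumes "filler_graph T d \<subseteq> filler_graph T' d'" "b \<in> T n"
  shows "b \<in> T' n"
proof -
  have "(n, (delta False n (), b), d n (delta False n (), b)) \<in> filler_graph T d"
    using assms(2) by (simp add: filler_graph_iff)
  then have "(n, (delta False n (), b), d n (delta False n (), b)) \<in> filler_graph T' d'"
    using assms(1) by blast
  then show ?thesis by (simp add: filler_graph_iff)
qed

lemma pp_filler_extend:
  assumes inf: "infinite (UNIV :: 'u set)"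
    and fib: "is_fibration TYPE('u) X Y p"
    and pr: "pp_problem k B S \<alpha> \<beta> v X Y p"
    and fill: "pp_filler k B S \<alpha> \<beta> v X Y p T d"
    and x: "x \<in> obj B n"
  obtains T' d' where "pp_filler k B S \<alpha> \<beta> v X Y p T' d'"
    "filler_graph T d \<subseteq> filler_graph T' d'" "x \<in> T' n"
proof -
  let ?G = "generated_subpsh B n x"
  have G: "is_subpsh B ?G"
    by (rule is_subpsh_generated[OF pp_problemD(1)[OF pr] x])
  obtain d2 where "pp_filler k (subpsh B ?G) (\<lambda>l. T l \<inter> ?G l) \<alpha> d v X Y p ?G d2"
    using fibration_fills_countable_pp_problem[OF inf fib pp_problem_restrict[OF pr fill G]]
    by (auto simp: countable_generated_subpsh)
  from pp_filler_glue[OF fill pp_filler_of_subpsh[OF G this]]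
  show thesis
    by (rule that) (auto simp: filler_graph_def generated_subpsh_self[OF pp_problemD(1)[OF pr] x])
qed

lemma the_Union_filler_graph_chain:
  assumes chain: "\<And>G G'. G \<in> C \<Longrightarrow> G' \<in> C \<Longrightarrow> G \<subseteq> G' \<or> G' \<subseteq> G"
    and graphs: "\<And>G. G \<in> C \<Longrightarrow> \<exists>T d. G = filler_graph T d"
    and "filler_graph T d \<in> C" "i \<in> shom n 1" "b \<in> T n"
  shows "(THE x. (n, (i, b), x) \<in> \<Union>C) = d n (i, b)"
proof (rule the_equality)
  have "(n, (i, b), d n (i, b)) \<in> filler_graph T d"
    using assms(4,5) by (simp add: filler_graph_iff)
  then show "(n, (i, b), d n (i, b)) \<in> \<Union>C"
    using assms(3) by blast
  fix x assume "(n, (i, b), x) \<in> \<Union>C"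
  then obtain G where G: "G \<in> C" "(n, (i, b), x) \<in> G" by blast
  obtain T' d' where G_eq: "G = filler_graph T' d'"
    using graphs[OF G(1)] by blast
  from chain[OF G(1) assms(3)] show "x = d n (i, b)"
  proof
    assume "G \<subseteq> filler_graph T d"
    then show ?thesis using G(2) by (auto simp: filler_graph_iff)
  next
    assume "filler_graph T d \<subseteq> G"
    then have "(n, (i, b), d n (i, b)) \<in> filler_graph T' d'"
      using \<open>(n, (i, b), d n (i, b)) \<in> filler_graph T d\<close> G_eq by blast
    then show ?thesis using G(2) by (simp add: G_eq filler_graph_iff)
  qed
qed

lemma pp_filler_cong:
  assumes "pp_filler k B S \<alpha> \<beta> v X Y p T d'"
    and "\<And>l i c. i \<in> shom l 1 \<Longrightarrow> c \<in> T l \<Longrightarrow> d l (i, c) = d' l (i, c)"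
  shows "pp_filler k B S \<alpha> \<beta> v X Y p T d"
proof -
  note d' = pp_fillerD[OF assms(1)]
  have "is_map (prod_psh Ipsh (subpsh B T)) X d"
    using is_map_obj[OF d'(3)] is_map_act[OF d'(3)] is_subpshD(2)[OF d'(1)] shom_compose assms(2)
    unfolding is_map_def by auto
  then show ?thesis
    unfolding pp_filler_def using d' assms(2) by auto
qed

lemma pp_filler_local:
  assumes S_sub: "\<And>n. S n \<subseteq> T n"
    and local: "\<And>n b. b \<in> T n \<Longrightarrow>
       \<exists>T'. pp_filler k B S \<alpha> \<beta> v X Y p T' d \<and> b \<in> T' n \<and> (\<forall>l. T' l \<subseteq> T l)"
  shows "pp_filler k B S \<alpha> \<beta> v X Y p T d"
proof -
  let ?filler = "\<lambda>T'. pp_filler k B S \<alpha> \<beta> v X Y p T' d"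
  have localE: thesis
    if "b \<in> T n" "\<And>T'. ?filler T' \<Longrightarrow> b \<in> T' n \<Longrightarrow> (\<And>l. T' l \<subseteq> T l) \<Longrightarrow> thesis" for b n thesis
    using local[OF that(1)] that(2) by blast
  show ?thesis
    unfolding pp_filler_def
  proof (intro conjI allI impI)
    show "is_subpsh B T"
      unfolding is_subpsh_def
    proof (intro conjI allI impI subsetI)
      fix n b assume "b \<in> T n"
      then obtain T' where "?filler T'" "b \<in> T' n"
        by (elim localE)
      then show "b \<in> obj B n" by (rule is_subpshD(1)[OF pp_fillerD(1)])
    next
      fix l n f b assume f: "f \<in> shom l n" and "b \<in> T n"
      then obtain T' where T': "?filler T'" "b \<in> T' n" "\<And>l. T' l \<subseteq> T l"
        by (elim localE) blast
      show "act B l n f b \<in> T l"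
        using is_subpshD(2)[OF pp_fillerD(1)[OF T'(1)] f T'(2)] T'(3) by blast
    qed
    show "S n \<subseteq> T n" for n by (rule S_sub)
  next
    show "is_map (prod_psh Ipsh (subpsh B T)) X d"
      unfolding is_map_def
    proof (intro conjI allI impI)
      fix n ib assume ib: "ib \<in> obj (prod_psh Ipsh (subpsh B T)) n"
      then have "snd ib \<in> T n" by auto
      then obtain T' where T': "?filler T'" "snd ib \<in> T' n"
        by (elim localE)
      show "d n ib \<in> obj X n"
        using is_map_obj[OF pp_fillerD(3)[OF T'(1)], of ib n] ib T'(2) by auto
    next
      fix l n f ib assume f: "f \<in> shom l n" and ib: "ib \<in> obj (prod_psh Ipsh (subpsh B T)) n"
      then have "snd ib \<in> T n" by auto
      then obtain T' where T': "?filler T'" "snd ib \<in> T' n"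
        by (elim localE)
      show "d l (act (prod_psh Ipsh (subpsh B T)) l n f ib) = act X l n f (d n ib)"
        using is_map_act[OF pp_fillerD(3)[OF T'(1)] f, of ib] ib T'(2) by auto
    qed
  next
    fix n b assume "b \<in> T n"
    then obtain T' where "?filler T'" "b \<in> T' n"
      by (elim localE)
    then show "d n (delta k n (), b) = \<alpha> n b" by (rule pp_fillerD(4))
  next
    fix n i s assume i: "i \<in> shom n 1" and s: "s \<in> S n"
    obtain T' where T': "?filler T'"
      using S_sub s by (blast elim: localE)
    show "d n (i, s) = \<beta> n (i, s)" by (rule pp_fillerD(5)[OF T' i s])
  next
    fix n i b assume i: "i \<in> shom n 1" and "b \<in> T n"
    then obtain T' where T': "?filler T'" "b \<in> T' n"
      by (elim localE)
    show "p n (d n (i, b)) = v n (i, b)" by (rule pp_fillerD(6)[OF T'(1) i T'(2)])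
  qed
qed

lemma pp_filler_chain_bound:
  assumes C: "C \<in> chains {filler_graph T d | T d. pp_filler k B S \<alpha> \<beta> v X Y p T d}"
    and "C \<noteq> {}"
  obtains T d where "pp_filler k B S \<alpha> \<beta> v X Y p T d" "\<And>G. G \<in> C \<Longrightarrow> G \<subseteq> filler_graph T d"
proof -
  let ?filler = "pp_filler k B S \<alpha> \<beta> v X Y p"
  have member: "\<exists>T d. G = filler_graph T d \<and> ?filler T d" if "G \<in> C" for G
    using chainsD2[OF C] that by blast
  define T where "T n = {b. \<exists>T' d'. filler_graph T' d' \<in> C \<and> ?filler T' d' \<and> b \<in> T' n}" for n
  define d where "d n ib = (THE x. (n, ib, x) \<in> \<Union>C)" for n ib
  have T_memI: "b \<in> T n" if "filler_graph T' d' \<in> C" "?filler T' d'" "b \<in> T' n" for T' d' b n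
    unfolding T_def using that by blast
  have d_eq: "d n (i, b) = d' n (i, b)"
    if "filler_graph T' d' \<in> C" "i \<in> shom n 1" "b \<in> T' n" for T' d' n i b
    unfolding d_def using chainsD[OF C] member that by (intro the_Union_filler_graph_chain) blast+
  obtain T0 d0 where T0: "filler_graph T0 d0 \<in> C" "?filler T0 d0"
    using \<open>C \<noteq> {}\<close> member by blast
  have "?filler T d"
  proof (rule pp_filler_local)
    show "S n \<subseteq> T n" for n
      using T_memI[OF T0] pp_fillerD(2)[OF T0(2)] by blast
    fix n b assume "b \<in> T n"
    then obtain T' d' where T': "filler_graph T' d' \<in> C" "?filler T' d'" "b \<in> T' n"
      unfolding T_def by blast
    have "?filler T' d"
      using pp_filler_cong[OF T'(2) d_eq[OF T'(1)]] .
    then show "\<exists>T'. ?filler T' d \<and> b \<in> T' n \<and> (\<forall>l. T' l \<subseteq> T l)"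
      using T_memI[OF T'(1,2)] T'(3) by blast
  qed
  moreover have "G \<subseteq> filler_graph T d" if GC: "G \<in> C" for G
  proof
    obtain T' d' where G: "G = filler_graph T' d'" "?filler T' d'"
      using member[OF GC] by blast
    fix z assume "z \<in> G"
    then obtain n i b where z: "z = (n, (i, b), d' n (i, b))" "i \<in> shom n 1" "b \<in> T' n"
      unfolding G(1) filler_graph_def by blast
    have "filler_graph T' d' \<in> C" using GC G(1) by simp
    from T_memI[OF this G(2) z(3)] d_eq[OF this z(2,3)] show "z \<in> filler_graph T d"
      using z by (simp add: filler_graph_iff)
  qed
  ultimately show thesis by (rule that)
qed

lemma fibration_fills_pp_problem:
  assumes inf: "infinite (UNIV :: 'u set)"
    and fib: "is_fibration TYPE('u) X Y p"
    and pr: "pp_problem k B S \<alpha> \<beta> v X Y p"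
  shows "\<exists>d. pp_filler k B S \<alpha> \<beta> v X Y p (obj B) d"
proof -
  let ?filler = "pp_filler k B S \<alpha> \<beta> v X Y p"
  define \<A> where "\<A> = {filler_graph T d | T d. ?filler T d}"
  have "\<forall>C\<in>chains \<A>. \<exists>U\<in>\<A>. \<forall>G\<in>C. G \<subseteq> U"
  proof
    fix C assume C: "C \<in> chains \<A>"
    show "\<exists>U\<in>\<A>. \<forall>G\<in>C. G \<subseteq> U"
    proof (cases "C = {}")
      case True
      then show ?thesis using pp_filler_base[OF pr] unfolding \<A>_def by blast
    next
      case False
      obtain T d where "?filler T d" "\<And>G. G \<in> C \<Longrightarrow> G \<subseteq> filler_graph T d"
        using pp_filler_chain_bound[OF C[unfolded \<A>_def] False] by blast
      then show ?thesis unfolding \<A>_def by blast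
    qed
  qed
  then obtain M where "M \<in> \<A>" and maximal: "\<forall>G\<in>\<A>. M \<subseteq> G \<longrightarrow> G = M"
    by (rule Zorn_Lemma2[THEN bexE])
  then obtain T d where M: "M = filler_graph T d" "?filler T d"
    unfolding \<A>_def by blast
  have "T n = obj B n" for n
  proof
    show "T n \<subseteq> obj B n"
      using is_subpshD(1)[OF pp_fillerD(1)[OF M(2)]] by blast
    show "obj B n \<subseteq> T n"
    proof
      fix x assume "x \<in> obj B n"
      then obtain T' d' where T': "?filler T' d'" "filler_graph T d \<subseteq> filler_graph T' d'" "x \<in> T' n"
        by (rule pp_filler_extend[OF inf fib pr M(2)])
      have "filler_graph T' d' \<in> \<A>"
        unfolding \<A>_def using T'(1) by blast
      then have "filler_graph T' d' = filler_graph T d"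
        using maximal T'(2) M(1) by blast
      then show "x \<in> T n" using filler_graph_subsetD[of T' d' T d] T'(3) by simp
    qed
  qed
  then have "T = obj B" ..
  then show ?thesis using M(2) by blast
qed

section \<open>The mapping cylinder\<close>

definition mcyl_c :: "'a psh \<Rightarrow> 'b psh \<Rightarrow> (nat \<Rightarrow> 'b \<Rightarrow> cmor) \<Rightarrow> (nat \<Rightarrow> 'a \<Rightarrow> 'b)
    \<Rightarrow> nat \<Rightarrow> 'b \<Rightarrow> ('b + cmor \<times> 'a) set" where
  "mcyl_c A B r m n b = po_rel A B (prod_psh Ipsh A) m (\<lambda>n a. (r n (m n a), a)) n `` {Inl b}"

definition mcyl_d :: "'a psh \<Rightarrow> 'b psh \<Rightarrow> (nat \<Rightarrow> 'b \<Rightarrow> cmor) \<Rightarrow> (nat \<Rightarrow> 'a \<Rightarrow> 'b)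
    \<Rightarrow> nat \<Rightarrow> cmor \<times> 'a \<Rightarrow> ('b + cmor \<times> 'a) set" where
  "mcyl_d A B r m n ia = po_rel A B (prod_psh Ipsh A) m (\<lambda>n a. (r n (m n a), a)) n `` {Inr ia}"

lemma is_map_mcyl_leg:
  assumes "is_map B Ipsh r" "is_map A B m"
  shows "is_map A (prod_psh Ipsh A) (\<lambda>n a. (r n (m n a), a))"
  using assms unfolding is_map_def by simp

lemma mcyl_obj_cases:
  assumes "S \<in> obj (mcyl A B r m) n"
  obtains (c) b where "b \<in> obj B n" "S = mcyl_c A B r m n b"
    | (d) i a where "i \<in> shom n 1" "a \<in> obj A n" "S = mcyl_d A B r m n (i, a)"
  using assms unfolding mcyl_def mcyl_c_def mcyl_d_def
  by (elim pushout_obj_cases) auto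

lemma mcyl_c_m:
  "a \<in> obj A n \<Longrightarrow> mcyl_c A B r m n (m n a) = mcyl_d A B r m n (r n (m n a), a)"
  unfolding mcyl_c_def mcyl_d_def by (intro po_rel_class_eq po_rel_generator)

lemma mcyl_map_c: "mcyl_map r m n (mcyl_c A B r m n b) = (r n b, b)"
  unfolding mcyl_map_def mcyl_c_def by (subst po_copair_class) auto

lemma mcyl_map_d: "mcyl_map r m n (mcyl_d A B r m n (i, a)) = (i, m n a)"
  unfolding mcyl_map_def mcyl_d_def by (subst po_copair_class) auto

lemma is_map_mcyl_c:
  assumes "is_psh A" "is_map B Ipsh r" "is_map A B m"
  shows "is_map B (mcyl A B r m) (mcyl_c A B r m)"
  unfolding is_map_def mcyl_def mcyl_c_def
  using act_pushout_class[OF assms(1,3) is_map_mcyl_leg[OF assms(2,3)]] by (auto intro: pushout_class_in_obj)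

lemma is_map_mcyl_d:
  assumes "is_psh A" "is_map B Ipsh r" "is_map A B m"
  shows "is_map (prod_psh Ipsh A) (mcyl A B r m) (mcyl_d A B r m)"
  unfolding is_map_def mcyl_def mcyl_d_def
  using act_pushout_class[OF assms(1,3) is_map_mcyl_leg[OF assms(2,3)]] by (auto intro: pushout_class_in_obj)

text \<open>The top map \<open>u : M\<^sub>r(m) \<rightarrow> X\<close> of the square is given by its composites
  \<open>uB = u \<circ> c\<^sub>r\<close> and \<open>uA = u \<circ> d\<^sub>r\<close>.\<close>

locale mcyl_square =
  fixes A :: "'a psh" and B :: "'b psh" and r :: "nat \<Rightarrow> 'b \<Rightarrow> cmor" and m :: "nat \<Rightarrow> 'a \<Rightarrow> 'b"
    and X :: "'x psh" and Y :: "'y psh" and p :: "nat \<Rightarrow> 'x \<Rightarrow> 'y"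
    and uB :: "nat \<Rightarrow> 'b \<Rightarrow> 'x" and uA :: "nat \<Rightarrow> cmor \<times> 'a \<Rightarrow> 'x"
    and v :: "nat \<Rightarrow> cmor \<times> 'b \<Rightarrow> 'y"
  assumes psh_A: "is_psh A" and psh_B: "is_psh B"
    and map_r: "is_map B Ipsh r" and mono_m: "is_mono A B m"
    and map_uB: "is_map B X uB" and map_uA: "is_map (prod_psh Ipsh A) X uA"
    and uB_m: "\<And>n a. a \<in> obj A n \<Longrightarrow> uB n (m n a) = uA n (r n (m n a), a)"
    and map_v: "is_map (prod_psh Ipsh B) Y v"
    and p_uB: "\<And>n b. b \<in> obj B n \<Longrightarrow> p n (uB n b) = v n (r n b, b)"
    and p_uA: "\<And>n i a. i \<in> shom n 1 \<Longrightarrow> a \<in> obj A n \<Longrightarrow> p n (uA n (i, a)) = v n (i, m n a)"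
begin

lemma map_m: "is_map A B m"
  using mono_m unfolding is_mono_def by blast

lemma r_shom: "b \<in> obj B n \<Longrightarrow> r n b \<in> shom n 1"
  using is_map_obj[OF map_r] by simp

lemma r_act: "f \<in> shom l n \<Longrightarrow> b \<in> obj B n \<Longrightarrow> r l (act B l n f b) = compose (cube l) (r n b) f"
  using is_map_act[OF map_r] by simp

lemma m_act: "f \<in> shom l n \<Longrightarrow> a \<in> obj A n \<Longrightarrow> m l (act A l n f a) = act B l n f (m n a)"
  using is_map_act[OF map_m] .

lemma m_inv: "a \<in> obj A n \<Longrightarrow> inv_into (obj A n) (m n) (m n a) = a"
  using mono_m unfolding is_mono_def by simp

lemma uA_act:
  "f \<in> shom l n \<Longrightarrow> i \<in> shom n 1 \<Longrightarrow> a \<in> obj A n \<Longrightarrow>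
     uA l (compose (cube l) i f, act A l n f a) = act X l n f (uA n (i, a))"
  using is_map_act[OF map_uA, of f l n "(i, a)"] by simp

lemma v_act:
  "f \<in> shom l n \<Longrightarrow> i \<in> shom n 1 \<Longrightarrow> b \<in> obj B n \<Longrightarrow>
     v l (compose (cube l) i f, act B l n f b) = act Y l n f (v n (i, b))"
  using is_map_act[OF map_v, of f l n "(i, b)"] by simp

lemmas A_act_closed = is_psh_act_closed[OF psh_A] and B_act_closed = is_psh_act_closed[OF psh_B]
  and m_obj = is_map_obj[OF map_m]

lemma join_homotopy_problem:
  "pp_problem False B (\<lambda>n. m n ` obj A n) uB
     (\<lambda>n tb. uA n (ijoin n (r n (snd tb)) (fst tb), inv_into (obj A n) (m n) (snd tb)))
     (\<lambda>n tb. v n (ijoin n (r n (snd tb)) (fst tb), snd tb)) X Y p"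
  unfolding pp_problem_def
proof (intro conjI)
  show "is_subpsh B (\<lambda>n. m n ` obj A n)"
    by (rule is_subpsh_image[OF psh_A map_m])
  show "is_map (prod_psh Ipsh (subpsh B (\<lambda>n. m n ` obj A n))) X
      (\<lambda>n tb. uA n (ijoin n (r n (snd tb)) (fst tb), inv_into (obj A n) (m n) (snd tb)))"
    unfolding is_map_def
  proof (intro conjI allI impI)
    fix n tb assume "tb \<in> obj (prod_psh Ipsh (subpsh B (\<lambda>n. m n ` obj A n))) n"
    then obtain t a where tb: "tb = (t, m n a)" "t \<in> shom n 1" "a \<in> obj A n" by auto
    then show "uA n (ijoin n (r n (snd tb)) (fst tb), inv_into (obj A n) (m n) (snd tb)) \<in> obj X n"
      using is_map_obj[OF map_uA] r_shom[OF m_obj] m_inv by auto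
  next
    fix l n f tb assume f: "f \<in> shom l n" and "tb \<in> obj (prod_psh Ipsh (subpsh B (\<lambda>n. m n ` obj A n))) n"
    then obtain t a where tb: "tb = (t, m n a)" "t \<in> shom n 1" "a \<in> obj A n" by auto
    have "r l (act B l n f (m n a)) = compose (cube l) (r n (m n a)) f"
      using r_act[OF f m_obj[OF tb(3)]] .
    then show "uA l (ijoin l (r l (snd (act (prod_psh Ipsh (subpsh B (\<lambda>n. m n ` obj A n))) l n f tb)))
                  (fst (act (prod_psh Ipsh (subpsh B (\<lambda>n. m n ` obj A n))) l n f tb)),
                inv_into (obj A l) (m l) (snd (act (prod_psh Ipsh (subpsh B (\<lambda>n. m n ` obj A n))) l n f tb)))
        = act X l n f (uA n (ijoin n (r n (snd tb)) (fst tb), inv_into (obj A n) (m n) (snd tb)))"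
      using tb uA_act[OF f ijoin_shom[OF r_shom[OF m_obj[OF tb(3)]] tb(2)] tb(3)]
        m_act[OF f tb(3), symmetric] m_inv A_act_closed[OF f tb(3)]
      by (simp add: compose_ijoin[OF f])
  qed
  show "is_map (prod_psh Ipsh B) Y (\<lambda>n tb. v n (ijoin n (r n (snd tb)) (fst tb), snd tb))"
    unfolding is_map_def
    using is_map_obj[OF map_v] r_shom v_act[OF _ ijoin_shom[OF r_shom]] r_act
    by (auto simp: compose_ijoin)
qed (use psh_B map_uB uB_m p_uB p_uA r_shom m_obj m_inv in auto)

definition join_homotopy :: "(nat \<Rightarrow> cmor \<times> 'b \<Rightarrow> 'x) \<Rightarrow> bool" where
  "join_homotopy g \<longleftrightarrow> is_map (prod_psh Ipsh B) X g \<and>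
     (\<forall>n b. b \<in> obj B n \<longrightarrow> g n (delta False n (), b) = uB n b) \<and>
     (\<forall>n i a. i \<in> shom n 1 \<longrightarrow> a \<in> obj A n \<longrightarrow> g n (i, m n a) = uA n (ijoin n (r n (m n a)) i, a)) \<and>
     (\<forall>n i b. i \<in> shom n 1 \<longrightarrow> b \<in> obj B n \<longrightarrow> p n (g n (i, b)) = v n (ijoin n (r n b) i, b))"

lemma join_homotopyD:
  assumes "join_homotopy g"
  shows "is_map (prod_psh Ipsh B) X g"
    and "\<And>n b. b \<in> obj B n \<Longrightarrow> g n (delta False n (), b) = uB n b"
    and "\<And>n i a. i \<in> shom n 1 \<Longrightarrow> a \<in> obj A n \<Longrightarrow> g n (i, m n a) = uA n (ijoin n (r n (m n a)) i, a)"
    and "\<And>n i b. i \<in> shom n 1 \<Longrightarrow> b \<in> obj B n \<Longrightarrow> p n (g n (i, b)) = v n (ijoin n (r n b) i, b)"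
  using assms unfolding join_homotopy_def by blast+

lemma join_homotopy_exists:
  assumes "infinite (UNIV :: 'u set)" "is_fibration TYPE('u) X Y p"
  obtains g where "join_homotopy g"
proof -
  obtain g where "pp_filler False B (\<lambda>n. m n ` obj A n) uB
     (\<lambda>n tb. uA n (ijoin n (r n (snd tb)) (fst tb), inv_into (obj A n) (m n) (snd tb)))
     (\<lambda>n tb. v n (ijoin n (r n (snd tb)) (fst tb), snd tb)) X Y p (obj B) g"
    using fibration_fills_pp_problem[OF assms join_homotopy_problem] by blast
  then have "join_homotopy g"
    unfolding pp_filler_def join_homotopy_def using m_inv by auto
  then show thesis by (rule that)
qed

definition mcyl_image :: "nat \<Rightarrow> (cmor \<times> 'b) set" where
  "mcyl_image n = {(s, b). s \<in> shom n 1 \<and> b \<in> obj B n \<and> (s = r n b \<or> b \<in> m n ` obj A n)}"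

definition mcyl_image_side :: "(nat \<Rightarrow> cmor \<times> 'b \<Rightarrow> 'x) \<Rightarrow> nat \<Rightarrow> cmor \<times> cmor \<times> 'b \<Rightarrow> 'x" where
  "mcyl_image_side g n tsb = (case tsb of (t, s, b) \<Rightarrow>
     if s = r n b then g n (t, b) else uA n (ijoin n s t, inv_into (obj A n) (m n) b))"

lemma mcyl_image_side_r: "mcyl_image_side g n (t, r n b, b) = g n (t, b)"
  by (simp add: mcyl_image_side_def)

lemma mcyl_image_side_m:
  assumes "join_homotopy g" "t \<in> shom n 1" "s \<in> shom n 1" "a \<in> obj A n"
  shows "mcyl_image_side g n (t, s, m n a) = uA n (ijoin n s t, a)"
  using join_homotopyD(3)[OF assms(1,2,4)] assms(4) m_inv by (auto simp: mcyl_image_side_def)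

lemma mcyl_image_cases:
  assumes "(s, b) \<in> mcyl_image n"
  obtains (r) "s = r n b" "b \<in> obj B n"
    | (m) a where "s \<in> shom n 1" "a \<in> obj A n" "b = m n a"
  using assms unfolding mcyl_image_def by blast

lemma is_subpsh_mcyl_image: "is_subpsh (prod_psh Ipsh B) mcyl_image"
  unfolding is_subpsh_def
proof (intro conjI allI impI subsetI)
  fix n sb assume "sb \<in> mcyl_image n"
  then show "sb \<in> obj (prod_psh Ipsh B) n" unfolding mcyl_image_def by auto
next
  fix l n f sb assume f: "f \<in> shom l n" and sb: "sb \<in> mcyl_image n"
  obtain s b where sb_eq: "sb = (s, b)" by (cases sb)
  have "s \<in> shom n 1" "b \<in> obj B n"
    using sb unfolding sb_eq mcyl_image_def by auto
  moreover have "compose (cube l) s f = r l (act B l n f b) \<or> act B l n f b \<in> m l ` obj A l"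
    using sb[unfolded sb_eq]
  proof (cases rule: mcyl_image_cases)
    case r
    then show ?thesis using r_act[OF f] by simp
  next
    case (m a)
    then have "act B l n f b \<in> m l ` obj A l"
      using m_act[OF f] A_act_closed[OF f] by (metis image_eqI)
    then show ?thesis ..
  qed
  ultimately show "act (prod_psh Ipsh B) l n f sb \<in> mcyl_image l"
    unfolding sb_eq mcyl_image_def using shom_compose[OF f] B_act_closed[OF f] by auto
qed

lemma is_map_mcyl_image_side:
  assumes g: "join_homotopy g"
  shows "is_map (prod_psh Ipsh (subpsh (prod_psh Ipsh B) mcyl_image)) X (mcyl_image_side g)"
  unfolding is_map_def
proof (intro conjI allI impI)
  fix n tsb assume "tsb \<in> obj (prod_psh Ipsh (subpsh (prod_psh Ipsh B) mcyl_image)) n"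
  then obtain t s b where tsb: "tsb = (t, s, b)" "t \<in> shom n 1" "(s, b) \<in> mcyl_image n"
    by auto
  from tsb(3) show "mcyl_image_side g n tsb \<in> obj X n"
  proof (cases rule: mcyl_image_cases)
    case r
    then show ?thesis
      using tsb is_map_obj[OF join_homotopyD(1)[OF g], of "(t, b)"] by (simp add: mcyl_image_side_r)
  next
    case (m a)
    then show ?thesis
      using tsb mcyl_image_side_m[OF g tsb(2) m(1,2)] is_map_obj[OF map_uA, of "(ijoin n s t, a)"] by simp
  qed
next
  fix l n f tsb
  assume f: "f \<in> shom l n" and "tsb \<in> obj (prod_psh Ipsh (subpsh (prod_psh Ipsh B) mcyl_image)) n"
  then obtain t s b where tsb: "tsb = (t, s, b)" "t \<in> shom n 1" "(s, b) \<in> mcyl_image n"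
    by auto
  from tsb(3)
  show "mcyl_image_side g l (act (prod_psh Ipsh (subpsh (prod_psh Ipsh B) mcyl_image)) l n f tsb)
      = act X l n f (mcyl_image_side g n tsb)"
  proof (cases rule: mcyl_image_cases)
    case r
    then show ?thesis
      using tsb r_act[OF f r(2), symmetric] is_map_act[OF join_homotopyD(1)[OF g] f, of "(t, b)"]
      by (simp add: mcyl_image_side_r)
  next
    case (m a)
    then show ?thesis
      using tsb mcyl_image_side_m[OF g] uA_act[OF f ijoin_shom[OF m(1) tsb(2)] m(2)]
        m_act[OF f m(2), symmetric] A_act_closed[OF f m(2)] shom_compose[OF f]
      by (simp add: compose_ijoin[OF f])
  qed
qed

lemma mcyl_image_problem:
  assumes g: "join_homotopy g"
  shows "pp_problem True (prod_psh Ipsh B) mcyl_image (\<lambda>n sb. g n (delta True n (), snd sb))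
    (mcyl_image_side g) (\<lambda>n tsb. v n (ijoin n (fst (snd tsb)) (fst tsb), snd (snd tsb))) X Y p"
  unfolding pp_problem_def
proof (intro conjI allI impI)
  show "is_psh (prod_psh Ipsh B)"
    by (rule is_psh_prod_psh[OF is_psh_Ipsh psh_B])
  show "is_subpsh (prod_psh Ipsh B) mcyl_image"
    by (rule is_subpsh_mcyl_image)
  show "is_map (prod_psh Ipsh (subpsh (prod_psh Ipsh B) mcyl_image)) X (mcyl_image_side g)"
    by (rule is_map_mcyl_image_side[OF g])
  show "is_map (prod_psh Ipsh B) X (\<lambda>n sb. g n (delta True n (), snd sb))"
    unfolding is_map_def
  proof (intro conjI allI impI)
    fix n sb assume "sb \<in> obj (prod_psh Ipsh B) n"
    then show "g n (delta True n (), snd sb) \<in> obj X n"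
      using is_map_obj[OF join_homotopyD(1)[OF g], of "(delta True n (), snd sb)"] by auto
  next
    fix l n f sb assume "f \<in> shom l n" "sb \<in> obj (prod_psh Ipsh B) n"
    then show "g l (delta True l (), snd (act (prod_psh Ipsh B) l n f sb))
        = act X l n f (g n (delta True n (), snd sb))"
      using is_map_act[OF join_homotopyD(1)[OF g], of f l n "(delta True n (), snd sb)"] by auto
  qed
  show "is_map (prod_psh Ipsh (prod_psh Ipsh B)) Y
      (\<lambda>n tsb. v n (ijoin n (fst (snd tsb)) (fst tsb), snd (snd tsb)))"
    using is_map_obj[OF map_v] v_act[OF _ ijoin_shom] unfolding is_map_def
    by (auto simp: compose_ijoin)
next
  fix n sb assume "sb \<in> mcyl_image n"
  then obtain s b where sb: "sb = (s, b)" "(s, b) \<in> mcyl_image n" by (cases sb) auto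
  from sb(2) show "mcyl_image_side g n (delta True n (), sb) = g n (delta True n (), snd sb)"
  proof (cases rule: mcyl_image_cases)
    case r
    then show ?thesis using sb(1) by (simp add: mcyl_image_side_r)
  next
    case (m a)
    then show ?thesis
      using sb(1) mcyl_image_side_m[OF g delta_shom m(1,2)] join_homotopyD(3)[OF g delta_shom m(2)]
        r_shom[OF m_obj[OF m(2)]] by simp
  qed
next
  fix n sb assume "sb \<in> obj (prod_psh Ipsh B) n"
  then show "p n (g n (delta True n (), snd sb)) = v n (ijoin n (fst (snd (delta True n (), sb))) (fst (delta True n (), sb)), snd (snd (delta True n (), sb)))"
    using join_homotopyD(4)[OF g delta_shom] r_shom by auto
next
  fix n t sb assume t: "t \<in> shom n 1" and "sb \<in> mcyl_image n"
  then obtain s b where sb: "sb = (s, b)" "(s, b) \<in> mcyl_image n" by (cases sb) auto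
  from sb(2) show "p n (mcyl_image_side g n (t, sb)) = v n (ijoin n (fst (snd (t, sb))) (fst (t, sb)), snd (snd (t, sb)))"
  proof (cases rule: mcyl_image_cases)
    case r
    then show ?thesis using sb(1) join_homotopyD(4)[OF g t] by (simp add: mcyl_image_side_r)
  next
    case (m a)
    then show ?thesis using sb(1) mcyl_image_side_m[OF g t m(1,2)] p_uA[OF ijoin_shom[OF m(1) t] m(2)] by simp
  qed
qed

lemma mcyl_square_lift:
  assumes "infinite (UNIV :: 'u set)" "is_fibration TYPE('u) X Y p"
  obtains d where "is_map (prod_psh Ipsh B) X d"
    "\<And>n b. b \<in> obj B n \<Longrightarrow> d n (r n b, b) = uB n b"
    "\<And>n i a. i \<in> shom n 1 \<Longrightarrow> a \<in> obj A n \<Longrightarrow> d n (i, m n a) = uA n (i, a)"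
    "\<And>n ib. ib \<in> obj (prod_psh Ipsh B) n \<Longrightarrow> p n (d n ib) = v n ib"
proof -
  obtain g where g: "join_homotopy g"
    using join_homotopy_exists[OF assms] .
  obtain e where e: "pp_filler True (prod_psh Ipsh B) mcyl_image (\<lambda>n sb. g n (delta True n (), snd sb))
      (mcyl_image_side g) (\<lambda>n tsb. v n (ijoin n (fst (snd tsb)) (fst tsb), snd (snd tsb))) X Y p
      (obj (prod_psh Ipsh B)) e"
    using fibration_fills_pp_problem[OF assms mcyl_image_problem[OF g]] by blast
  have face: "e n (delta False n (), sb) = mcyl_image_side g n (delta False n (), sb)" if "sb \<in> mcyl_image n" for n sb
    using pp_fillerD(5)[OF e delta_shom that] .
  show thesis
  proof (rule that)
    note e_map = pp_fillerD(3)[OF e, simplified]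
    show "is_map (prod_psh Ipsh B) X (\<lambda>n sb. e n (delta False n (), sb))"
      unfolding is_map_def
    proof (intro conjI allI impI)
      fix n sb assume "sb \<in> obj (prod_psh Ipsh B) n"
      then show "e n (delta False n (), sb) \<in> obj X n"
        using is_map_obj[OF e_map, of "(delta False n (), sb)"] by simp
    next
      fix l n f sb assume "f \<in> shom l n" "sb \<in> obj (prod_psh Ipsh B) n"
      then show "e l (delta False l (), act (prod_psh Ipsh B) l n f sb) = act X l n f (e n (delta False n (), sb))"
        using is_map_act[OF e_map, of f l n "(delta False n (), sb)"] by simp
    qed
  next
    fix n b assume "b \<in> obj B n"
    then have "(r n b, b) \<in> mcyl_image n" using r_shom by (simp add: mcyl_image_def)
    then show "e n (delta False n (), r n b, b) = uB n b"
      using face join_homotopyD(2)[OF g \<open>b \<in> obj B n\<close>] by (simp add: mcyl_image_side_r)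
  next
    fix n i a assume "i \<in> shom n 1" "a \<in> obj A n"
    then have "(i, m n a) \<in> mcyl_image n" using m_obj by (simp add: mcyl_image_def)
    then show "e n (delta False n (), i, m n a) = uA n (i, a)"
      using face mcyl_image_side_m[OF g delta_shom \<open>i \<in> shom n 1\<close> \<open>a \<in> obj A n\<close>] \<open>i \<in> shom n 1\<close>
      by simp
  next
    fix n ib assume "ib \<in> obj (prod_psh Ipsh B) n"
    then show "p n (e n (delta False n (), ib)) = v n ib"
      using pp_fillerD(6)[OF e delta_shom, of ib n] by auto
  qed
qed

end

lemma mcyl_square_of_square:
  assumes "is_psh A" "is_psh B" "is_map B Ipsh r" "is_mono A B m"
    and u: "is_map (mcyl A B r m) X u" and v: "is_map (prod_psh Ipsh B) Y v"
    and comm: "\<And>n a. a \<in> obj (mcyl A B r m) n \<Longrightarrow> p n (u n a) = v n (mcyl_map r m n a)"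
  shows "mcyl_square A B r m X Y p (\<lambda>n b. u n (mcyl_c A B r m n b)) (\<lambda>n ia. u n (mcyl_d A B r m n ia)) v"
proof -
  have m: "is_map A B m" using assms(4) unfolding is_mono_def by blast
  note c = is_map_mcyl_c[OF assms(1,3) m] and d = is_map_mcyl_d[OF assms(1,3) m]
  show ?thesis
  proof
    show "p n (u n (mcyl_c A B r m n b)) = v n (r n b, b)" if "b \<in> obj B n" for n b
      using comm[OF is_map_obj[OF c that]] by (simp add: mcyl_map_c)
    show "p n (u n (mcyl_d A B r m n (i, a))) = v n (i, m n a)" if "i \<in> shom n 1" "a \<in> obj A n" for n i a
      using comm[OF is_map_obj[OF d, of "(i, a)"]] that by (simp add: mcyl_map_d)
  qed (use assms is_map_comp[OF c u] is_map_comp[OF d u] v in \<open>simp_all add: mcyl_c_m\<close>)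
qed

theorem mainTheorem2:
  fixes A :: "'a psh" and B :: "'b psh"
    and r :: "nat \<Rightarrow> 'b \<Rightarrow> (bool list \<Rightarrow> bool list)"
    and m :: "nat \<Rightarrow> 'a \<Rightarrow> 'b"
    and X :: "'x psh" and Y :: "'y psh" and p :: "nat \<Rightarrow> 'x \<Rightarrow> 'y"
  assumes "infinite (UNIV :: 'u set)"
    and "is_psh A" and "is_psh B"
    and "is_map B Ipsh r"
    and "is_mono A B m"
    and "is_psh X" and "is_psh Y"
    and "is_fibration TYPE('u) X Y p"
  shows "llp (mcyl A B r m) (prod_psh Ipsh B) (mcyl_map r m) X Y p"
  unfolding llp_def
proof (intro allI impI)
  fix u v
  assume u: "is_map (mcyl A B r m) X u" and v: "is_map (prod_psh Ipsh B) Y v"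
    and comm: "\<forall>n a. a \<in> obj (mcyl A B r m) n \<longrightarrow> p n (u n a) = v n (mcyl_map r m n a)"
  interpret mcyl_square A B r m X Y p "\<lambda>n b. u n (mcyl_c A B r m n b)" "\<lambda>n ia. u n (mcyl_d A B r m n ia)" v
    using mcyl_square_of_square[OF assms(2-5) u v] comm by blast
  obtain d where d: "is_map (prod_psh Ipsh B) X d"
    "\<And>n b. b \<in> obj B n \<Longrightarrow> d n (r n b, b) = u n (mcyl_c A B r m n b)"
    "\<And>n i a. i \<in> shom n 1 \<Longrightarrow> a \<in> obj A n \<Longrightarrow> d n (i, m n a) = u n (mcyl_d A B r m n (i, a))"
    "\<And>n ib. ib \<in> obj (prod_psh Ipsh B) n \<Longrightarrow> p n (d n ib) = v n ib"
    using mcyl_square_lift[OF assms(1,8)] by blast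
  have "d n (mcyl_map r m n S) = u n S" if "S \<in> obj (mcyl A B r m) n" for n S
    using that by (cases rule: mcyl_obj_cases) (simp_all add: d(2,3) mcyl_map_c mcyl_map_d)
  then show "\<exists>d. is_map (prod_psh Ipsh B) X d \<and>
      (\<forall>n a. a \<in> obj (mcyl A B r m) n \<longrightarrow> d n (mcyl_map r m n a) = u n a) \<and>
      (\<forall>n b. b \<in> obj (prod_psh Ipsh B) n \<longrightarrow> p n (d n b) = v n b)"
    using d(1,4) by blast
qed

end
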